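(* Let $p_{\rm data}$ be a probability density on $\mathbb{R}^d$, $\gamma=\mathcal{N}(0,I_d)$, and $\Phi:\mathbb{R}^d\to\mathbb{R}^d$ a measurable one-to-one map with $\Phi_\#\gamma$ having a density. Fix $y$ and a measurable likelihood $x_0\mapsto p(y\mid x_0)\ge0$ with $\sup_{x_0}p(y\mid x_0)<\infty$, $Z_y:=\int p(y\mid x)p_{\rm data}(x)dx>0$ and $\int p(y\mid x)\Phi_\#\gamma(x)dx>0$. Let $p_{0,y}\propto p(y\mid x_0)p_{\rm data}(x_0)$ be the true posterior, let $\tilde p_{1,y}(x_1)\propto p(y\mid\Phi(x_1))\gamma(x_1)$ be the noise-space model posterior, and let $\tilde p_{1,y}^S$ be any probability distribution on $\mathbb{R}^d$; set $\tilde p_{0,y}^S:=\Phi_\#\tilde p_{1,y}^S$. If $\mathrm{TV}(p_{\rm data},\Phi_\#\gamma)\le\varepsilon$ and $\mathrm{TV}(\tilde p_{1,y},\tilde p_{1,y}^S)\le\varepsilon_S$, then $$\mathrm{TV}(p_{0,y},\tilde p_{0,y}^S)\le 2\kappa_y\varepsilon+\varepsilon_S,\qquad \kappa_y:=\frac{\sup_{x_0}p(y\mid x_0)}{\int p(y\mid x)p_{\rm data}(x)\,dx}.$$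
   Context: $\propto$ denotes equality up to a normalizing constant making the density integrate to one. For a measurable map $T$ and distribution $P$, $T_\#P(A)=P(T^{-1}A)$ is the push-forward. $\mathrm{TV}(P,Q)=\sup_A|P(A)-Q(A)|$, equal to $\frac12\int|p-q|$ for densities. Note $\Phi_\#\tilde p_{1,y}$ is the model posterior $\propto p(y\mid x_0)\Phi_\#\gamma(x_0)$. *)

theory Defs
  imports "HOL-Probability.Probability"
begin

definition gauss_dens :: "real ^ 'd \<Rightarrow> real" where
  "gauss_dens x = (\<Prod>i\<in>UNIV. std_normal_density (x $ i))"

definition tv_dist :: "'a measure \<Rightarrow> 'a measure \<Rightarrow> real" where
  "tv_dist P Q = (SUP A\<in>sets P. \<bar>measure P A - measure Q A\<bar>)"

end

theory Submission
  imports Defs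
begin

text \<open>
  Both posteriors reweight a prior by the likelihood \<open>0 \<le> L \<le> C\<close>, and reweighting is stable in
  total variation: for \<open>0 \<le> h \<le> C\<close> one has \<open>|\<integral>h f\<^sub>1 - \<integral>h f\<^sub>2| \<le> C \<cdot> TV(f\<^sub>1, f\<^sub>2)\<close>
  (compare with \<open>C\<close> times the indicator of \<open>{f\<^sub>1 > f\<^sub>2}\<close>). Hence the unnormalised mass of every
  set and the normalising constant each move by at most \<open>C \<epsilon>\<close>, which costs \<open>2 C \<epsilon> / Z\<close> after
  normalising; this compares the true posterior with the model posterior. The model posterior is
  the push-forward under \<open>\<Phi>\<close> of the noise-space posterior, since the latter evaluates the
  likelihood at \<open>\<Phi> x\<^sub>1\<close>, and push-forward does not increase total variation, so the sampler error
  \<open>\<epsilon>\<^sub>S\<close> carries over. The triangle inequality adds the two bounds.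
\<close>

lemma gauss_dens_borel_measurable [measurable]: "gauss_dens \<in> borel_measurable borel"
  unfolding gauss_dens_def by measurable

lemma gauss_dens_nonneg: "0 \<le> gauss_dens x"
  unfolding gauss_dens_def by (auto intro!: prod_nonneg normal_density_nonneg)

lemma nn_integral_std_normal_density: "(\<integral>\<^sup>+x. ennreal (std_normal_density x) \<partial>lborel) = 1"
proof -
  interpret prob_space "density lborel (\<lambda>x. ennreal (std_normal_density x))"
    by (rule prob_space_normal_density) simp
  show ?thesis
    using emeasure_space_1 by (simp add: emeasure_density)
qed

lemma prob_space_gauss_dens:
  "prob_space (density lborel (\<lambda>x::real^'d::finite. ennreal (gauss_dens x)))"
proof
  have Basis_axis: "Basis = (\<lambda>i. axis i (1::real)) ` (UNIV :: 'd::finite set)"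
    unfolding Basis_vec_def by auto
  have "inj (\<lambda>i. axis i (1::real) :: real^'d)"
    by (auto simp: inj_def axis_eq_axis)
  then have "gauss_dens x = (\<Prod>b\<in>Basis. std_normal_density (x \<bullet> b))" for x :: "real^'d"
    unfolding gauss_dens_def Basis_axis by (simp add: prod.reindex inner_axis)
  then have "ennreal (gauss_dens x) = (\<Prod>b\<in>Basis. ennreal (std_normal_density (x \<bullet> b)))"
    for x :: "real^'d"
    by (simp add: prod_ennreal normal_density_nonneg)
  then have "(\<integral>\<^sup>+x. ennreal (gauss_dens x) \<partial>(lborel :: (real^'d) measure)) =
      (\<integral>\<^sup>+x. (\<Prod>b\<in>Basis. ennreal (std_normal_density (x \<bullet> b))) \<partial>(lborel :: (real^'d) measure))"
    by simp
  also have "\<dots> = (\<Prod>b\<in>(Basis :: (real^'d) set). \<integral>\<^sup>+x. ennreal (std_normal_density x) \<partial>lborel)"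
    by (rule nn_integral_lborel_prod) auto
  finally show "emeasure (density lborel (\<lambda>x::real^'d. ennreal (gauss_dens x)))
      (space (density lborel (\<lambda>x::real^'d. ennreal (gauss_dens x)))) = 1"
    by (simp add: emeasure_density nn_integral_std_normal_density)
qed

lemma integrable_bounded_mult:
  fixes f h :: "'a \<Rightarrow> real"
  assumes "integrable M f" "h \<in> borel_measurable M" "\<And>x. \<bar>h x\<bar> \<le> C"
  shows "integrable M (\<lambda>x. h x * f x)"
proof (rule Bochner_Integration.integrable_bound)
  show "integrable M (\<lambda>x. C * f x)"
    using assms(1) by simp
  have "\<bar>h x\<bar> \<le> \<bar>C\<bar>" for x
    using assms(3)[of x] by linarith
  then show "AE x in M. norm (h x * f x) \<le> norm (C * f x)"
    by (simp add: abs_mult mult_right_mono)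
qed (use assms in measurable)

lemma finite_measure_density_integrable:
  fixes f :: "'a \<Rightarrow> real"
  assumes "f \<in> borel_measurable M" "\<And>x. 0 \<le> f x" "integrable M f"
  shows "finite_measure (density M (\<lambda>x. ennreal (f x)))"
proof
  have "(\<integral>\<^sup>+x. ennreal (f x) \<partial>M) = ennreal (\<integral>x. f x \<partial>M)"
    using assms by (intro nn_integral_eq_integral) auto
  then show "emeasure (density M (\<lambda>x. ennreal (f x))) (space (density M (\<lambda>x. ennreal (f x)))) \<noteq> \<infinity>"
    using assms by (simp add: emeasure_density)
qed

lemma integrable_density_finite_measure:
  fixes f :: "'a \<Rightarrow> real"
  assumes "f \<in> borel_measurable M" "\<And>x. 0 \<le> f x" "finite_measure (density M (\<lambda>x. ennreal (f x)))"
  shows "integrable M f"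
proof (rule integrableI_nonneg)
  have "(\<integral>\<^sup>+x. ennreal (f x) \<partial>M) = emeasure (density M (\<lambda>x. ennreal (f x))) (space M)"
    using assms(1) by (simp add: emeasure_density)
  then show "(\<integral>\<^sup>+x. ennreal (f x) \<partial>M) < \<infinity>"
    using finite_measure.emeasure_finite[OF assms(3), of "space M"] by (simp add: top.not_eq_extremum)
qed (use assms in auto)

lemma integrable_gauss_dens: "integrable lborel (gauss_dens :: real^'d::finite \<Rightarrow> real)"
  by (intro integrable_density_finite_measure prob_space.finite_measure prob_space_gauss_dens)
    (auto simp: gauss_dens_nonneg)

lemma measure_density_eq_integral:
  fixes f :: "'a \<Rightarrow> real"
  assumes "f \<in> borel_measurable M" "\<And>x. 0 \<le> f x" "integrable M f" "A \<in> sets M"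
  shows "measure (density M (\<lambda>x. ennreal (f x))) A = (\<integral>x. indicator A x * f x \<partial>M)"
proof -
  have "emeasure (density M (\<lambda>x. ennreal (f x))) A = (\<integral>\<^sup>+x. ennreal (indicator A x * f x) \<partial>M)"
    using assms by (auto simp: emeasure_density intro!: nn_integral_cong split: split_indicator)
  also have "\<dots> = ennreal (\<integral>x. indicator A x * f x \<partial>M)"
    using assms integrable_real_mult_indicator[of A M f]
    by (intro nn_integral_eq_integral) (auto simp: mult.commute)
  finally show ?thesis
    using assms by (simp add: measure_def integral_nonneg_AE)
qed

lemma finite_measure_posterior_density:
  fixes f L :: "'a \<Rightarrow> real"
  assumes [measurable]: "f \<in> borel_measurable M" "L \<in> borel_measurable M"
    and "\<And>x. 0 \<le> f x" "integrable M f" "\<And>x. 0 \<le> L x" "\<And>x. L x \<le> C"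
  shows "finite_measure (density M (\<lambda>x. ennreal (L x * f x / (\<integral>x. L x * f x \<partial>M))))"
proof (rule finite_measure_density_integrable)
  have "\<bar>L x\<bar> \<le> C" for x
    using assms(5,6)[of x] by simp
  then show "integrable M (\<lambda>x. L x * f x / (\<integral>x. L x * f x \<partial>M))"
    using assms(4) by (intro integrable_divide integrable_bounded_mult) auto
  show "0 \<le> L x * f x / (\<integral>x. L x * f x \<partial>M)" for x
    using assms by (auto intro!: divide_nonneg_nonneg integral_nonneg_AE)
qed (use assms in auto)

lemma bdd_above_measure_diff:
  assumes "finite_measure P" "finite_measure Q"
  shows "bdd_above ((\<lambda>A. \<bar>measure P A - measure Q A\<bar>) ` S)"
proof (rule bdd_aboveI2)
  fix A
  have "measure P A \<le> measure P (space P)" "measure Q A \<le> measure Q (space Q)"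
    using assms by (auto intro: finite_measure.bounded_measure)
  then show "\<bar>measure P A - measure Q A\<bar> \<le> measure P (space P) + measure Q (space Q)"
    using measure_nonneg[of P A] measure_nonneg[of Q A] by linarith
qed

lemma measure_diff_le_tv_dist:
  assumes "finite_measure P" "finite_measure Q" "A \<in> sets P"
  shows "\<bar>measure P A - measure Q A\<bar> \<le> tv_dist P Q"
  unfolding tv_dist_def by (rule cSUP_upper[OF assms(3) bdd_above_measure_diff[OF assms(1,2)]])

lemma tv_dist_le:
  assumes "\<And>A. A \<in> sets P \<Longrightarrow> \<bar>measure P A - measure Q A\<bar> \<le> e"
  shows "tv_dist P Q \<le> e"
  unfolding tv_dist_def using assms by (intro cSUP_least) auto

lemma tv_dist_triangle:
  assumes "finite_measure P" "finite_measure Q" "finite_measure R"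
    and "sets Q = sets P" "sets R = sets P"
  shows "tv_dist P R \<le> tv_dist P Q + tv_dist Q R"
proof (rule tv_dist_le)
  fix A assume "A \<in> sets P"
  then have "\<bar>measure P A - measure Q A\<bar> \<le> tv_dist P Q" "\<bar>measure Q A - measure R A\<bar> \<le> tv_dist Q R"
    using assms by (auto intro!: measure_diff_le_tv_dist)
  then show "\<bar>measure P A - measure R A\<bar> \<le> tv_dist P Q + tv_dist Q R"
    by linarith
qed

lemma tv_dist_distr_le:
  assumes "finite_measure P" "finite_measure Q" "sets Q = sets P" "T \<in> measurable P N"
  shows "tv_dist (distr P N T) (distr Q N T) \<le> tv_dist P Q"
proof (rule tv_dist_le)
  have T: "T \<in> measurable Q N"
    using assms(3,4) measurable_cong_sets[OF assms(3) refl] by blast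
  have "space Q = space P"
    using assms(3) by (rule sets_eq_imp_space_eq)
  fix A assume "A \<in> sets (distr P N T)"
  then have "measure (distr P N T) A = measure P (T -` A \<inter> space P)"
    "measure (distr Q N T) A = measure Q (T -` A \<inter> space P)"
    "T -` A \<inter> space P \<in> sets P"
    using assms(4) T \<open>space Q = space P\<close> by (auto simp: measure_distr)
  then show "\<bar>measure (distr P N T) A - measure (distr Q N T) A\<bar> \<le> tv_dist P Q"
    using measure_diff_le_tv_dist[OF assms(1,2)] by simp
qed

lemma integral_mult_diff_le_setwise:
  fixes f1 f2 h :: "'a \<Rightarrow> real"
  assumes [measurable]: "f1 \<in> borel_measurable M" "f2 \<in> borel_measurable M" "h \<in> borel_measurable M"
    and "integrable M f1" "integrable M f2"
    and h: "\<And>x. 0 \<le> h x" "\<And>x. h x \<le> C"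
    and setwise: "\<And>B. B \<in> sets M \<Longrightarrow>
      (\<integral>x. indicator B x * f1 x \<partial>M) - (\<integral>x. indicator B x * f2 x \<partial>M) \<le> e"
  shows "(\<integral>x. h x * f1 x \<partial>M) - (\<integral>x. h x * f2 x \<partial>M) \<le> C * e"
proof -
  define B where "B = {x \<in> space M. f2 x < f1 x}"
  have B: "B \<in> sets M"
    unfolding B_def by measurable
  have "\<bar>h x\<bar> \<le> C" "\<bar>indicator B x * C\<bar> \<le> C" for x
    using h[of x] by (auto simp: indicator_def)
  then have int: "integrable M (\<lambda>x. h x * f1 x)" "integrable M (\<lambda>x. h x * f2 x)"
    "integrable M (\<lambda>x. indicator B x * C * f1 x)" "integrable M (\<lambda>x. indicator B x * C * f2 x)"
    using assms B by (auto intro!: integrable_bounded_mult)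
  have "h x * f1 x - h x * f2 x \<le> indicator B x * C * f1 x - indicator B x * C * f2 x"
    if "x \<in> space M" for x
    using h[of x] that by (cases "x \<in> B")
      (auto simp: B_def indicator_def right_diff_distrib[symmetric] mult_right_mono mult_nonneg_nonpos)
  then have "(\<integral>x. h x * f1 x \<partial>M) - (\<integral>x. h x * f2 x \<partial>M)
      \<le> (\<integral>x. indicator B x * C * f1 x \<partial>M) - (\<integral>x. indicator B x * C * f2 x \<partial>M)"
    using int by (simp add: integral_mono flip: Bochner_Integration.integral_diff)
  also have "\<dots> = C * ((\<integral>x. indicator B x * f1 x \<partial>M) - (\<integral>x. indicator B x * f2 x \<partial>M))"
    by (simp add: mult_ac right_diff_distrib)
  also have "\<dots> \<le> C * e"
    using setwise[OF B] h[of undefined] by (intro mult_left_mono) auto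
  finally show ?thesis .
qed

lemma abs_integral_mult_diff_le_tv_dist:
  fixes f1 f2 h :: "'a \<Rightarrow> real"
  assumes [measurable]: "f1 \<in> borel_measurable M" "f2 \<in> borel_measurable M" "h \<in> borel_measurable M"
    and "\<And>x. 0 \<le> f1 x" "\<And>x. 0 \<le> f2 x" "integrable M f1" "integrable M f2"
    and "\<And>x. 0 \<le> h x" "\<And>x. h x \<le> C"
  shows "\<bar>(\<integral>x. h x * f1 x \<partial>M) - (\<integral>x. h x * f2 x \<partial>M)\<bar>
    \<le> C * tv_dist (density M (\<lambda>x. ennreal (f1 x))) (density M (\<lambda>x. ennreal (f2 x)))"
proof -
  let ?tv = "tv_dist (density M (\<lambda>x. ennreal (f1 x))) (density M (\<lambda>x. ennreal (f2 x)))"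
  have "\<bar>(\<integral>x. indicator B x * f1 x \<partial>M) - (\<integral>x. indicator B x * f2 x \<partial>M)\<bar> \<le> ?tv"
    if "B \<in> sets M" for B
    using measure_diff_le_tv_dist[of "density M (\<lambda>x. ennreal (f1 x))" "density M (\<lambda>x. ennreal (f2 x))" B]
    using assms that by (simp add: finite_measure_density_integrable measure_density_eq_integral)
  then have "(\<integral>x. h x * f1 x \<partial>M) - (\<integral>x. h x * f2 x \<partial>M) \<le> C * ?tv"
    "(\<integral>x. h x * f2 x \<partial>M) - (\<integral>x. h x * f1 x \<partial>M) \<le> C * ?tv"
    using assms by (auto intro!: integral_mult_diff_le_setwise simp: abs_le_iff)
  then show ?thesis
    by linarith
qed

lemma abs_ratio_diff_le:
  fixes a b Z1 Z2 e :: real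
  assumes "0 < Z1" "0 < Z2" "0 \<le> b" "b \<le> Z2" "\<bar>a - b\<bar> \<le> e" "\<bar>Z1 - Z2\<bar> \<le> e"
  shows "\<bar>a / Z1 - b / Z2\<bar> \<le> 2 * e / Z1"
proof -
  have "\<bar>b / Z2 * (Z2 - Z1)\<bar> \<le> \<bar>Z1 - Z2\<bar>"
    unfolding abs_mult abs_minus_commute[of Z2]
    using assms mult_right_mono[of "b / Z2" 1 "\<bar>Z1 - Z2\<bar>"] by simp
  then have "\<bar>(a - b) + b / Z2 * (Z2 - Z1)\<bar> \<le> e + e"
    using assms(5,6) by (intro order_trans[OF abs_triangle_ineq] add_mono) auto
  moreover have "a / Z1 - b / Z2 = ((a - b) + b / Z2 * (Z2 - Z1)) / Z1"
    using assms by (simp add: field_simps)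
  ultimately show ?thesis
    using assms by (simp add: abs_divide divide_right_mono)
qed

lemma tv_dist_reweighted_density_le:
  fixes f1 f2 L :: "'a \<Rightarrow> real"
  assumes [measurable]: "f1 \<in> borel_measurable M" "f2 \<in> borel_measurable M" "L \<in> borel_measurable M"
    and f: "\<And>x. 0 \<le> f1 x" "\<And>x. 0 \<le> f2 x" "integrable M f1" "integrable M f2"
    and L: "\<And>x. 0 \<le> L x" "\<And>x. L x \<le> C"
    and Z: "0 < (\<integral>x. L x * f1 x \<partial>M)" "0 < (\<integral>x. L x * f2 x \<partial>M)"
  shows "tv_dist (density M (\<lambda>x. ennreal (L x * f1 x / (\<integral>x. L x * f1 x \<partial>M))))
      (density M (\<lambda>x. ennreal (L x * f2 x / (\<integral>x. L x * f2 x \<partial>M))))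
    \<le> 2 * C * tv_dist (density M (\<lambda>x. ennreal (f1 x))) (density M (\<lambda>x. ennreal (f2 x)))
      / (\<integral>x. L x * f1 x \<partial>M)"
proof (rule tv_dist_le)
  let ?e = "C * tv_dist (density M (\<lambda>x. ennreal (f1 x))) (density M (\<lambda>x. ennreal (f2 x)))"
  have L_abs: "\<bar>L x\<bar> \<le> C" "\<bar>indicator A x * L x\<bar> \<le> C" "indicator A x * L x \<le> C" for A x
    using L[of x] by (auto simp: indicator_def)
  have measure_posterior: "measure (density M (\<lambda>x. ennreal (L x * f x / Z))) A
      = (\<integral>x. indicator A x * L x * f x \<partial>M) / Z"
    if [measurable]: "f \<in> borel_measurable M" and "\<And>x. 0 \<le> f x" "integrable M f" "0 < Z" "A \<in> sets M"
    for f Z A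
  proof -
    have "integrable M (\<lambda>x. L x * f x / Z)"
      using integrable_bounded_mult[OF that(3) _ L_abs(1)] by simp
    then show ?thesis
      using that L by (subst measure_density_eq_integral) (auto simp: mult_ac)
  qed
  fix A assume "A \<in> sets (density M (\<lambda>x. ennreal (L x * f1 x / (\<integral>x. L x * f1 x \<partial>M))))"
  then have A [measurable]: "A \<in> sets M"
    by simp
  have int: "integrable M (\<lambda>x. indicator A x * L x * f2 x)" "integrable M (\<lambda>x. L x * f2 x)"
    using f L_abs by (auto simp: mult.assoc intro!: integrable_bounded_mult)
  have "\<bar>(\<integral>x. indicator A x * L x * f1 x \<partial>M) / (\<integral>x. L x * f1 x \<partial>M)
      - (\<integral>x. indicator A x * L x * f2 x \<partial>M) / (\<integral>x. L x * f2 x \<partial>M)\<bar>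
      \<le> 2 * ?e / (\<integral>x. L x * f1 x \<partial>M)"
  proof (rule abs_ratio_diff_le)
    show "\<bar>(\<integral>x. indicator A x * L x * f1 x \<partial>M) - (\<integral>x. indicator A x * L x * f2 x \<partial>M)\<bar> \<le> ?e"
      "\<bar>(\<integral>x. L x * f1 x \<partial>M) - (\<integral>x. L x * f2 x \<partial>M)\<bar> \<le> ?e"
      using f L L_abs by (auto intro!: abs_integral_mult_diff_le_tv_dist)
    show "0 \<le> (\<integral>x. indicator A x * L x * f2 x \<partial>M)"
      using f L by (intro integral_nonneg_AE) auto
    show "(\<integral>x. indicator A x * L x * f2 x \<partial>M) \<le> (\<integral>x. L x * f2 x \<partial>M)"
      using int f L by (intro integral_mono) (auto simp: indicator_def)
  qed (use Z in auto)
  then show "\<bar>measure (density M (\<lambda>x. ennreal (L x * f1 x / (\<integral>x. L x * f1 x \<partial>M)))) A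
      - measure (density M (\<lambda>x. ennreal (L x * f2 x / (\<integral>x. L x * f2 x \<partial>M)))) A\<bar>
      \<le> 2 * C * tv_dist (density M (\<lambda>x. ennreal (f1 x))) (density M (\<lambda>x. ennreal (f2 x)))
        / (\<integral>x. L x * f1 x \<partial>M)"
    by (simp add: measure_posterior[OF assms(1) f(1,3) Z(1) A]
        measure_posterior[OF assms(2) f(2,4) Z(2) A] mult.assoc)
qed

lemma integral_comp_density_eq:
  fixes f :: "'a \<Rightarrow> real" and g h :: "'b \<Rightarrow> real"
  assumes [measurable]: "T \<in> measurable M N" "f \<in> borel_measurable M" "g \<in> borel_measurable N"
    "h \<in> borel_measurable N"
    and "\<And>x. 0 \<le> f x" "\<And>y. 0 \<le> g y" "sets K = sets N"
    and push: "distr (density M (\<lambda>x. ennreal (f x))) N T = density K (\<lambda>y. ennreal (g y))"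
  shows "(\<integral>x. h (T x) * f x \<partial>M) = (\<integral>y. h y * g y \<partial>K)"
proof -
  have [measurable]: "g \<in> borel_measurable K" "h \<in> borel_measurable K"
    using assms(3,4) by (simp_all add: measurable_cong_sets[OF assms(7) refl])
  have "(\<integral>x. h (T x) * f x \<partial>M) = (\<integral>x. h (T x) \<partial>density M (\<lambda>x. ennreal (f x)))"
    using assms by (subst integral_density) (auto simp: mult.commute)
  also have "\<dots> = (\<integral>y. h y \<partial>distr (density M (\<lambda>x. ennreal (f x))) N T)"
    by (subst integral_distr) auto
  also have "\<dots> = (\<integral>y. h y * g y \<partial>K)"
    unfolding push using assms by (subst integral_density) (auto simp: mult.commute)
  finally show ?thesis .
qed

lemma distr_reweighted_density:
  fixes f :: "'a \<Rightarrow> real" and g w :: "'b \<Rightarrow> real"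
  assumes [measurable]: "T \<in> measurable M N" "f \<in> borel_measurable M" "g \<in> borel_measurable N"
    "w \<in> borel_measurable N"
    and "\<And>x. 0 \<le> f x" "\<And>y. 0 \<le> w y" "sets K = sets N"
    and push: "distr (density M (\<lambda>x. ennreal (f x))) N T = density K (\<lambda>y. ennreal (g y))"
  shows "distr (density M (\<lambda>x. ennreal (w (T x) * f x))) N T = density K (\<lambda>y. ennreal (w y * g y))"
proof -
  have [measurable]: "g \<in> borel_measurable K" "w \<in> borel_measurable K"
    using assms(3,4) by (simp_all add: measurable_cong_sets[OF assms(7) refl])
  have "density M (\<lambda>x. ennreal (w (T x) * f x))
      = density (density M (\<lambda>x. ennreal (f x))) (\<lambda>x. ennreal (w (T x)))"
    using assms by (simp add: density_density_eq ennreal_mult' mult.commute)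
  then have "distr (density M (\<lambda>x. ennreal (w (T x) * f x))) N T
      = density (distr (density M (\<lambda>x. ennreal (f x))) N T) (\<lambda>y. ennreal (w y))"
    by (simp add: density_distr)
  also have "\<dots> = density K (\<lambda>y. ennreal (g y) * ennreal (w y))"
    unfolding push by (simp add: density_density_eq)
  also have "\<dots> = density K (\<lambda>y. ennreal (w y * g y))"
    using ennreal_mult'[OF assms(6)] by (metis mult.commute)
  finally show ?thesis .
qed

lemma distr_posterior_density:
  fixes f :: "'a \<Rightarrow> real" and g L :: "'b \<Rightarrow> real"
  assumes [measurable]: "T \<in> measurable M N" "f \<in> borel_measurable M" "g \<in> borel_measurable N"
    "L \<in> borel_measurable N"
    and "\<And>x. 0 \<le> f x" "\<And>y. 0 \<le> g y" "\<And>y. 0 \<le> L y" "sets K = sets N"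
    and push: "distr (density M (\<lambda>x. ennreal (f x))) N T = density K (\<lambda>y. ennreal (g y))"
  shows "distr (density M (\<lambda>x. ennreal (L (T x) * f x / (\<integral>x. L (T x) * f x \<partial>M)))) N T
    = density K (\<lambda>y. ennreal (L y * g y / (\<integral>y. L y * g y \<partial>K)))"
proof -
  have "(\<integral>x. L (T x) * f x \<partial>M) = (\<integral>y. L y * g y \<partial>K)"
    using assms by (intro integral_comp_density_eq) auto
  moreover have "0 \<le> (\<integral>y. L y * g y \<partial>K)"
    using assms by (intro integral_nonneg_AE) auto
  ultimately show ?thesis
    using distr_reweighted_density[OF assms(1-3), of "\<lambda>y. L y / (\<integral>y. L y * g y \<partial>K)"] assms
    by simp
qed

lemma tv_dist_distr_posterior_le:
  fixes f :: "'a \<Rightarrow> real" and g L :: "'b \<Rightarrow> real"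
  assumes [measurable]: "T \<in> measurable M N" "f \<in> borel_measurable M" "g \<in> borel_measurable N"
    "L \<in> borel_measurable N"
    and "\<And>x. 0 \<le> f x" "integrable M f" "\<And>y. 0 \<le> g y" "\<And>y. 0 \<le> L y" "\<And>y. L y \<le> C"
    and "sets K = sets N" "finite_measure Q" "sets Q = sets M"
    and push: "distr (density M (\<lambda>x. ennreal (f x))) N T = density K (\<lambda>y. ennreal (g y))"
  shows "tv_dist (density K (\<lambda>y. ennreal (L y * g y / (\<integral>y. L y * g y \<partial>K)))) (distr Q N T)
    \<le> tv_dist (density M (\<lambda>x. ennreal (L (T x) * f x / (\<integral>x. L (T x) * f x \<partial>M)))) Q"
proof -
  have fin: "finite_measure (density M (\<lambda>x. ennreal (L (T x) * f x / (\<integral>x. L (T x) * f x \<partial>M))))"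
    by (rule finite_measure_posterior_density) (use assms in auto)
  then show ?thesis
    using tv_dist_distr_le[OF fin assms(11), of T N] distr_posterior_density[OF assms(1-5,7,8,10) push]
      assms(12) by simp
qed

theorem corollary1:
  fixes p_data :: "real ^ 'd \<Rightarrow> real"
    and \<Phi> :: "real ^ 'd \<Rightarrow> real ^ 'd"
    and L :: "real ^ 'd \<Rightarrow> real"
    and Q :: "(real ^ 'd) measure"
    and \<epsilon> \<epsilon>S :: real
  assumes pdata_meas: "p_data \<in> borel_measurable borel"
    and pdata_nonneg: "\<And>x. p_data x \<ge> 0"
    and pdata_int: "integrable lborel p_data"
    and pdata_one: "(LINT x|lborel. p_data x) = 1"
    and Phi_meas: "\<Phi> \<in> borel_measurable borel"
    and Phi_inj: "inj \<Phi>"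
    and Phi_dens: "\<exists>g. g \<in> borel_measurable borel \<and> (\<forall>x. g x \<ge> 0) \<and>
         distr (density lborel (\<lambda>x. ennreal (gauss_dens x))) borel \<Phi> = density lborel (\<lambda>x. ennreal (g x))"
    and L_meas: "L \<in> borel_measurable borel"
    and L_nonneg: "\<And>x. L x \<ge> 0"
    and L_bdd: "bdd_above (range L)"
    and Z_pos: "(LINT x|lborel. L x * p_data x) > 0"
    and model_pos: "(LINT x|distr (density lborel (\<lambda>x. ennreal (gauss_dens x))) borel \<Phi>. L x) > 0"
    and Q_prob: "prob_space Q"
    and Q_sets: "sets Q = sets borel"
    and tv_prior: "tv_dist (density lborel (\<lambda>x. ennreal (p_data x)))
                     (distr (density lborel (\<lambda>x. ennreal (gauss_dens x))) borel \<Phi>) \<le> \<epsilon>"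
    and tv_sampler: "tv_dist
          (density lborel (\<lambda>x1. ennreal (L (\<Phi> x1) * gauss_dens x1
               / (LINT u|lborel. L (\<Phi> u) * gauss_dens u))))
          Q \<le> \<epsilon>S"
  shows "tv_dist
          (density lborel (\<lambda>x0. ennreal (L x0 * p_data x0 / (LINT x|lborel. L x * p_data x))))
          (distr Q borel \<Phi>)
         \<le> 2 * (Sup (range L) / (LINT x|lborel. L x * p_data x)) * \<epsilon> + \<epsilon>S"
proof -
  note [measurable] = pdata_meas Phi_meas L_meas
  obtain g where [measurable]: "g \<in> borel_measurable borel" and g_nonneg: "\<And>x. 0 \<le> g x"
    and push: "distr (density lborel (\<lambda>x. ennreal (gauss_dens x))) borel \<Phi> = density lborel (\<lambda>x. ennreal (g x))"
    using Phi_dens by blast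
  define C where "C = Sup (range L)"
  have L_le: "L x \<le> C" for x
    using L_bdd by (auto simp: C_def intro: cSup_upper)
  have "prob_space (density lborel (\<lambda>x. ennreal (g x)))"
    unfolding push[symmetric] by (intro prob_space.prob_space_distr prob_space_gauss_dens) simp
  then have g_int: "integrable lborel g"
    by (intro integrable_density_finite_measure) (auto simp: g_nonneg prob_space.finite_measure)
  have model_norm: "0 < (\<integral>x. L x * g x \<partial>lborel)"
    using model_pos by (simp add: push integral_density g_nonneg mult.commute)
  let ?P0 = "density lborel (\<lambda>x. ennreal (L x * p_data x / (\<integral>x. L x * p_data x \<partial>lborel)))"
  let ?Pm = "density lborel (\<lambda>x. ennreal (L x * g x / (\<integral>x. L x * g x \<partial>lborel)))"
  have "tv_dist ?P0 ?Pm
      \<le> 2 * C * tv_dist (density lborel p_data) (density lborel g) / (\<integral>x. L x * p_data x \<partial>lborel)"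
    by (rule tv_dist_reweighted_density_le)
      (use pdata_nonneg pdata_int g_nonneg g_int L_nonneg L_le Z_pos model_norm in auto)
  also have "\<dots> \<le> 2 * C * \<epsilon> / (\<integral>x. L x * p_data x \<partial>lborel)"
    using tv_prior L_le[of 0] L_nonneg[of 0] Z_pos by (intro divide_right_mono mult_left_mono) (auto simp: push)
  finally have prior_part: "tv_dist ?P0 ?Pm \<le> 2 * C * \<epsilon> / (\<integral>x. L x * p_data x \<partial>lborel)" .
  have "tv_dist ?Pm (distr Q borel \<Phi>) \<le> tv_dist (density lborel (\<lambda>x1. ennreal (L (\<Phi> x1) * gauss_dens x1
      / (\<integral>u. L (\<Phi> u) * gauss_dens u \<partial>lborel)))) Q"
    by (rule tv_dist_distr_posterior_le[where C = C])
      (use gauss_dens_nonneg integrable_gauss_dens g_nonneg L_nonneg L_le push Q_prob Q_sets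
        in \<open>auto simp: prob_space.finite_measure\<close>)
  also have "\<dots> \<le> \<epsilon>S"
    by (rule tv_sampler)
  finally have sampler_part: "tv_dist ?Pm (distr Q borel \<Phi>) \<le> \<epsilon>S" .
  have "tv_dist ?P0 (distr Q borel \<Phi>) \<le> tv_dist ?P0 ?Pm + tv_dist ?Pm (distr Q borel \<Phi>)"
  proof (rule tv_dist_triangle)
    show "finite_measure ?P0" "finite_measure ?Pm"
      using pdata_nonneg pdata_int g_nonneg g_int L_nonneg L_le
      by (auto intro!: finite_measure_posterior_density)
    have "\<Phi> \<in> measurable Q borel"
      using Phi_meas by (simp add: measurable_cong_sets[OF Q_sets refl])
    then show "finite_measure (distr Q borel \<Phi>)"
      by (rule prob_space.finite_measure[OF prob_space.prob_space_distr[OF Q_prob]])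
  qed simp_all
  then show ?thesis
    using prior_part sampler_part by (simp add: C_def)
qed

end
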